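(* Let $G=(V,E)$ be a connected undirected graph with $n=|V|$ nodes, let $\beta$ be a finite set (batch) of new edges on $V$, and let $G'=(V,E\cup\beta)$. For nodes $s\neq t$, let $d_s(t)$, $\sigma_{st}$ and $\mathcal{S}_{st}$ denote the distance, the number of shortest paths and the set of shortest paths from $s$ to $t$ in $G$, and let $d'_s(t)$, $\sigma'_{st}$, $\mathcal{S}'_{st}$ denote the same quantities in $G'$. Let $S=\{p_{(1)},\dots,p_{(r)}\}$ be a set of $r$ shortest paths of $G$ sampled according to $\pi_G$, i.e. for each $k=1,\dots,r$ and each shortest path $p_{st}$ of $G$ between distinct nodes $s,t$, $\Pr(p_{(k)}=p_{st})=\pi_G(p_{st})=\frac{1}{n(n-1)}\cdot\frac{1}{\sigma_{st}}$ (equivalently: an ordered pair $(s,t)$ of distinct nodes is chosen uniformly at random and then a path is chosen uniformly at random from $\mathcal{S}_{st}$). Let $\mathcal{P}$ be the procedure that builds $S'=\{p'_{(1)},\dots,p'_{(r)}\}$ by replacing each sampled path $p_{(k)}=p_{st}\in S$ (with endpoints $s,t$) by a path $p'_{st}$ according to the rules: (1) $p'_{st}=p_{st}$ if $d'_s(t)=d_s(t)$ and $\sigma'_{st}=\sigma_{st}$; (2) otherwise, $p'_{st}$ is selected uniformly at random among $\mathcal{S}'_{st}$. Then each $p'_{st}$ is a shortest path of $G'$, and for every shortest path $p'_{xy}$ of $G'$ between distinct nodes $x,y$ and every $k=1,\dots,r$, \[\Pr(p'_{(k)}=p'_{xy})=\frac{1}{n(n-1)}\cdot\frac{1}{\s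igma'_{xy}}.\]
   Context: Shortest paths, distances and path counts are taken in the (undirected) graphs $G$ and $G'$; $G'$ is obtained from $G$ by inserting the edges of the batch $\beta$ (edge insertions only). *)

theory Defs
  imports "HOL-Probability.Probability"
begin

definition ugraph :: "'a set \<Rightarrow> 'a set set \<Rightarrow> bool" where
  "ugraph V E \<longleftrightarrow> finite V \<and> (\<forall>e\<in>E. \<exists>u v. e = {u, v} \<and> u \<noteq> v \<and> u \<in> V \<and> v \<in> V)"

definition walk :: "'a set \<Rightarrow> 'a set set \<Rightarrow> 'a list \<Rightarrow> bool" where
  "walk V E p \<longleftrightarrow> p \<noteq> [] \<and> set p \<subseteq> V \<and>
     (\<forall>i. Suc i < length p \<longrightarrow> {p ! i, p ! Suc i} \<in> E)"

definition connected_graph :: "'a set \<Rightarrow> 'a set set \<Rightarrow> bool" where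
  "connected_graph V E \<longleftrightarrow>
     (\<forall>s\<in>V. \<forall>t\<in>V. \<exists>p. walk V E p \<and> hd p = s \<and> last p = t)"

definition dist_g :: "'a set \<Rightarrow> 'a set set \<Rightarrow> 'a \<Rightarrow> 'a \<Rightarrow> nat" where
  "dist_g V E s t = (LEAST d. \<exists>p. walk V E p \<and> hd p = s \<and> last p = t \<and> length p = Suc d)"

definition shortest_paths :: "'a set \<Rightarrow> 'a set set \<Rightarrow> 'a \<Rightarrow> 'a \<Rightarrow> 'a list set" where
  "shortest_paths V E s t =
     {p. walk V E p \<and> hd p = s \<and> last p = t \<and> length p = Suc (dist_g V E s t)}"

definition num_sp :: "'a set \<Rightarrow> 'a set set \<Rightarrow> 'a \<Rightarrow> 'a \<Rightarrow> nat" where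
  "num_sp V E s t = card (shortest_paths V E s t)"

definition pi_G :: "'a set \<Rightarrow> 'a set set \<Rightarrow> 'a list pmf" where
  "pi_G V E = do {
     st \<leftarrow> pmf_of_set {(s, t). s \<in> V \<and> t \<in> V \<and> s \<noteq> t};
     pmf_of_set (shortest_paths V E (fst st) (snd st)) }"

definition update_path :: "'a set \<Rightarrow> 'a set set \<Rightarrow> 'a set set \<Rightarrow> 'a list \<Rightarrow> 'a list pmf" where
  "update_path V E E' p =
     (let s = hd p; t = last p in
      if dist_g V E' s t = dist_g V E s t \<and> num_sp V E' s t = num_sp V E s t
      then return_pmf p
      else pmf_of_set (shortest_paths V E' s t))"

definition sample_S :: "'a set \<Rightarrow> 'a set set \<Rightarrow> nat \<Rightarrow> (nat \<Rightarrow> 'a list) pmf" where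
  "sample_S V E r = Pi_pmf {1..r} [] (\<lambda>_. pi_G V E)"

definition sample_S' :: "'a set \<Rightarrow> 'a set set \<Rightarrow> 'a set set \<Rightarrow> nat \<Rightarrow> (nat \<Rightarrow> 'a list) pmf" where
  "sample_S' V E E' r =
     sample_S V E r \<bind> (\<lambda>S. Pi_pmf {1..r} [] (\<lambda>k. update_path V E E' (S k)))"

end

theory Submission
  imports Defs
begin

text \<open>Conditioned on its endpoints (s, t), a path drawn from \<open>\<pi>\<^sub>G\<close> is uniform on the shortest
  s-t paths of G. If the distance and the number of shortest paths do not change, then, since
  adding edges keeps every old shortest path a walk of the same length, the two sets of shortest
  paths coincide and the path is kept; otherwise it is redrawn uniformly from the new set. In
  both cases the result is uniform on the shortest s-t paths of G', so the updated path is
  distributed according to \<open>\<pi>\<^sub>G\<^sub>'\<close>. Each component of the updated sample depends only on the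
  corresponding component of the old one, so each component has law \<open>\<pi>\<^sub>G\<^sub>'\<close>.\<close>

lemma walk_mono: "walk V E p \<Longrightarrow> E \<subseteq> E' \<Longrightarrow> walk V E' p"
  unfolding walk_def by blast

lemma connected_graph_mono: "connected_graph V E \<Longrightarrow> E \<subseteq> E' \<Longrightarrow> connected_graph V E'"
  unfolding connected_graph_def by (meson walk_mono)

lemma shortest_paths_hd_last: "p \<in> shortest_paths V E s t \<Longrightarrow> hd p = s \<and> last p = t"
  unfolding shortest_paths_def by auto

lemma shortest_paths_nonempty:
  assumes "walk V E p" "hd p = s" "last p = t"
  shows "shortest_paths V E s t \<noteq> {}"
proof -
  have "p \<noteq> []" using assms(1) unfolding walk_def by auto
  then have "\<exists>d p. walk V E p \<and> hd p = s \<and> last p = t \<and> length p = Suc d"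
    using assms by (intro exI[of _ "length p - 1"] exI[of _ p]) auto
  from LeastI_ex[OF this] show ?thesis
    unfolding shortest_paths_def dist_g_def by auto
qed

lemma connected_graph_shortest_paths_nonempty:
  assumes "connected_graph V E" "s \<in> V" "t \<in> V"
  shows "shortest_paths V E s t \<noteq> {}"
proof -
  obtain p where "walk V E p" "hd p = s" "last p = t"
    using assms unfolding connected_graph_def by blast
  then show ?thesis by (rule shortest_paths_nonempty)
qed

lemma finite_shortest_paths:
  assumes "finite V"
  shows "finite (shortest_paths V E s t)"
proof -
  have "shortest_paths V E s t \<subseteq> {xs. set xs \<subseteq> V \<and> length xs = Suc (dist_g V E s t)}"
    unfolding shortest_paths_def walk_def by auto
  then show ?thesis using finite_lists_length_eq[OF assms] finite_subset by blast
qed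

lemma set_pmf_of_shortest_paths:
  "finite V \<Longrightarrow> shortest_paths V E s t \<noteq> {} \<Longrightarrow>
     set_pmf (pmf_of_set (shortest_paths V E s t)) = shortest_paths V E s t"
  by (simp add: finite_shortest_paths)

definition unchanged_pair :: "'a set \<Rightarrow> 'a set set \<Rightarrow> 'a set set \<Rightarrow> 'a \<Rightarrow> 'a \<Rightarrow> bool" where
  "unchanged_pair V E E' s t \<longleftrightarrow>
     dist_g V E' s t = dist_g V E s t \<and> num_sp V E' s t = num_sp V E s t"

lemma shortest_paths_eq_if_unchanged:
  assumes "finite V" "E \<subseteq> E'" "unchanged_pair V E E' s t"
  shows "shortest_paths V E s t = shortest_paths V E' s t"
proof (rule card_subset_eq[OF finite_shortest_paths[OF assms(1)]])
  show "shortest_paths V E s t \<subseteq> shortest_paths V E' s t"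
    unfolding shortest_paths_def using assms(2,3) walk_mono by (auto simp: unchanged_pair_def)
  show "card (shortest_paths V E s t) = card (shortest_paths V E' s t)"
    using assms(3) by (simp add: num_sp_def unchanged_pair_def)
qed

lemma update_path_of_shortest_path:
  assumes "p \<in> shortest_paths V E s t"
  shows "update_path V E E' p =
    (if unchanged_pair V E E' s t then return_pmf p else pmf_of_set (shortest_paths V E' s t))"
  using shortest_paths_hd_last[OF assms] by (simp add: update_path_def unchanged_pair_def)

lemma set_pmf_update_path:
  assumes "finite V" "E \<subseteq> E'" "p \<in> shortest_paths V E s t"
  shows "set_pmf (update_path V E E' p) \<subseteq> shortest_paths V E' s t"
proof (cases "unchanged_pair V E E' s t")
  case True
  then show ?thesis
    using assms(3) shortest_paths_eq_if_unchanged[OF assms(1,2) True]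
    by (simp add: update_path_of_shortest_path[OF assms(3)])
next
  case False
  have "walk V E' p" "hd p = s" "last p = t"
    using assms walk_mono by (auto simp: shortest_paths_def)
  then have "shortest_paths V E' s t \<noteq> {}" by (rule shortest_paths_nonempty)
  then show ?thesis
    using assms False by (simp add: update_path_of_shortest_path set_pmf_of_shortest_paths)
qed

lemma uniform_shortest_path_bind_update_path:
  assumes "finite V" "E \<subseteq> E'" "connected_graph V E" "s \<in> V" "t \<in> V"
  shows "pmf_of_set (shortest_paths V E s t) \<bind> update_path V E E'
       = pmf_of_set (shortest_paths V E' s t)"
proof -
  have support: "set_pmf (pmf_of_set (shortest_paths V E s t)) = shortest_paths V E s t"
    using assms by (simp add: set_pmf_of_shortest_paths connected_graph_shortest_paths_nonempty)
  show ?thesis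
  proof (cases "unchanged_pair V E E' s t")
    case True
    have "pmf_of_set (shortest_paths V E s t) \<bind> update_path V E E'
        = pmf_of_set (shortest_paths V E s t) \<bind> return_pmf"
      using True by (intro bind_pmf_cong) (simp_all add: support update_path_of_shortest_path)
    then show ?thesis
      using shortest_paths_eq_if_unchanged[OF assms(1,2) True] by (simp add: bind_return_pmf')
  next
    case False
    have "pmf_of_set (shortest_paths V E s t) \<bind> update_path V E E'
        = pmf_of_set (shortest_paths V E s t) \<bind> (\<lambda>_. pmf_of_set (shortest_paths V E' s t))"
      using False by (intro bind_pmf_cong) (simp_all add: support update_path_of_shortest_path)
    then show ?thesis by simp
  qed
qed

lemma card_offdiagonal:
  assumes "finite V"
  shows "real (card {(s, t). s \<in> V \<and> t \<in> V \<and> s \<noteq> t}) = real (card V) * (real (card V) - 1)"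
proof -
  have "{(s, t). s \<in> V \<and> t \<in> V \<and> s \<noteq> t} = V \<times> V - (\<lambda>v. (v, v)) ` V" by auto
  moreover have "card ((\<lambda>v. (v, v)) ` V) = card V" by (rule card_image) (auto simp: inj_on_def)
  ultimately have "card {(s, t). s \<in> V \<and> t \<in> V \<and> s \<noteq> t} = card V * card V - card V"
    using assms by (simp add: card_Diff_subset card_cartesian_product image_subset_iff)
  then show ?thesis by (simp add: of_nat_diff algebra_simps)
qed

lemma offdiagonal_nonempty:
  assumes "2 \<le> card V"
  shows "{(s, t). s \<in> V \<and> t \<in> V \<and> s \<noteq> t} \<noteq> {}"
proof -
  have "finite V" using assms card.infinite by fastforce
  moreover have "\<not> card V \<le> Suc 0" using assms by simp
  ultimately obtain s t where "s \<in> V" "t \<in> V" "s \<noteq> t"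
    using card_le_Suc0_iff_eq by blast
  then show ?thesis by blast
qed

lemma finite_offdiagonal: "finite V \<Longrightarrow> finite {(s, t). s \<in> V \<and> t \<in> V \<and> s \<noteq> t}"
  by (rule finite_subset[of _ "V \<times> V"]) auto

lemma set_pmf_pi_G:
  assumes "finite V" "connected_graph V E" "2 \<le> card V" "p \<in> set_pmf (pi_G V E)"
  shows "p \<in> shortest_paths V E (hd p) (last p)"
proof -
  have pairs: "set_pmf (pmf_of_set {(s, t). s \<in> V \<and> t \<in> V \<and> s \<noteq> t})
      = {(s, t). s \<in> V \<and> t \<in> V \<and> s \<noteq> t}"
    by (rule set_pmf_of_set[OF offdiagonal_nonempty[OF assms(3)] finite_offdiagonal[OF assms(1)]])
  obtain st where st: "st \<in> {(s, t). s \<in> V \<and> t \<in> V \<and> s \<noteq> t}"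
      and p: "p \<in> set_pmf (pmf_of_set (shortest_paths V E (fst st) (snd st)))"
    using assms(4) unfolding pi_G_def set_bind_pmf pairs by (rule UN_E)
  from st have "shortest_paths V E (fst st) (snd st) \<noteq> {}"
    using connected_graph_shortest_paths_nonempty[OF assms(2)] by auto
  with p have "p \<in> shortest_paths V E (fst st) (snd st)"
    by (simp add: set_pmf_of_shortest_paths[OF assms(1)])
  moreover from this have "hd p = fst st" "last p = snd st"
    by (simp_all add: shortest_paths_hd_last)
  ultimately show ?thesis by simp
qed

lemma pi_G_bind_update_path:
  assumes "finite V" "E \<subseteq> E'" "connected_graph V E" "2 \<le> card V"
  shows "pi_G V E \<bind> update_path V E E' = pi_G V E'"
  unfolding pi_G_def bind_assoc_pmf
proof (rule bind_pmf_cong[OF refl])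
  fix st assume "st \<in> set_pmf (pmf_of_set {(s, t). s \<in> V \<and> t \<in> V \<and> s \<noteq> t})"
  then have "st \<in> {(s, t). s \<in> V \<and> t \<in> V \<and> s \<noteq> t}"
    by (simp only: set_pmf_of_set[OF offdiagonal_nonempty[OF assms(4)] finite_offdiagonal[OF assms(1)]])
  then have "fst st \<in> V" "snd st \<in> V" by auto
  then show "pmf_of_set (shortest_paths V E (fst st) (snd st)) \<bind> update_path V E E'
      = pmf_of_set (shortest_paths V E' (fst st) (snd st))"
    by (rule uniform_shortest_path_bind_update_path[OF assms(1-3)])
qed

lemma pmf_pi_G:
  assumes "finite V" "connected_graph V E" "2 \<le> card V"
    and "x \<in> V" "y \<in> V" "x \<noteq> y" "q \<in> shortest_paths V E x y"
  shows "pmf (pi_G V E) q = 1 / (real (card V) * (real (card V) - 1)) * (1 / real (num_sp V E x y))"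
proof -
  define P where "P = {(s, t). s \<in> V \<and> t \<in> V \<and> s \<noteq> t}"
  have ne: "P \<noteq> {}" and fin: "finite P"
    unfolding P_def using offdiagonal_nonempty[OF assms(3)] finite_offdiagonal[OF assms(1)] .
  have summand: "pmf (pmf_of_set (shortest_paths V E (fst st) (snd st))) q
      = (if st = (x, y) then 1 / real (num_sp V E x y) else 0)" if "st \<in> P" for st
  proof -
    have "shortest_paths V E (fst st) (snd st) \<noteq> {}"
      using that connected_graph_shortest_paths_nonempty[OF assms(2)] by (auto simp: P_def)
    moreover have "q \<in> shortest_paths V E (fst st) (snd st) \<longleftrightarrow> st = (x, y)"
      using shortest_paths_hd_last[OF assms(7)] shortest_paths_hd_last[of q V E "fst st" "snd st"]
        assms(7) by (cases st) auto
    ultimately show ?thesis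
      using assms(7) by (simp add: finite_shortest_paths[OF assms(1)] num_sp_def)
  qed
  have "(\<Sum>st\<in>P. pmf (pmf_of_set (shortest_paths V E (fst st) (snd st))) q)
      = (\<Sum>st\<in>P. if st = (x, y) then 1 / real (num_sp V E x y) else 0)"
    by (rule sum.cong[OF refl summand])
  also have "\<dots> = 1 / real (num_sp V E x y)"
    using fin assms(4-6) by (simp add: sum.delta P_def)
  finally have "pmf (pi_G V E) q = 1 / real (num_sp V E x y) / real (card P)"
    unfolding pi_G_def P_def[symmetric] pmf_bind_pmf_of_set[OF ne fin] by simp
  then show ?thesis
    using card_offdiagonal[OF assms(1)] by (simp add: P_def)
qed

lemma map_pmf_component_bind_Pi_pmf:
  assumes "finite I" "k \<in> I"
  shows "map_pmf (\<lambda>S. S k) (Pi_pmf I d p \<bind> (\<lambda>S. Pi_pmf I d' (\<lambda>i. f (S i)))) = p k \<bind> f"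
proof -
  have "map_pmf (\<lambda>S. S k) (Pi_pmf I d p \<bind> (\<lambda>S. Pi_pmf I d' (\<lambda>i. f (S i))))
      = Pi_pmf I d p \<bind> (\<lambda>S. f (S k))"
    unfolding map_bind_pmf using assms by (simp add: Pi_pmf_component)
  also have "\<dots> = map_pmf (\<lambda>S. S k) (Pi_pmf I d p) \<bind> f"
    by (simp add: bind_map_pmf)
  finally show ?thesis using assms by (simp add: Pi_pmf_component)
qed

theorem lemma2:
  fixes V :: "'a set" and E \<beta> :: "'a set set" and r :: nat
  assumes "ugraph V E" and "connected_graph V E"
    and "ugraph V \<beta>" and "finite \<beta>"
    and "card V \<ge> 2"
  shows "(\<forall>p \<in> set_pmf (pi_G V E). \<forall>q \<in> set_pmf (update_path V E (E \<union> \<beta>) p).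
            q \<in> shortest_paths V (E \<union> \<beta>) (hd p) (last p))
    \<and> (\<forall>k \<in> {1..r}. \<forall>x \<in> V. \<forall>y \<in> V. \<forall>q. x \<noteq> y \<longrightarrow> q \<in> shortest_paths V (E \<union> \<beta>) x y \<longrightarrow>
          pmf (map_pmf (\<lambda>S'. S' k) (sample_S' V E (E \<union> \<beta>) r)) q
            = 1 / (real (card V) * (real (card V) - 1)) * (1 / real (num_sp V (E \<union> \<beta>) x y)))"
proof -
  have finV: "finite V" using assms(1) unfolding ugraph_def by auto
  have sub: "E \<subseteq> E \<union> \<beta>" by auto
  have conn': "connected_graph V (E \<union> \<beta>)" using connected_graph_mono[OF assms(2) sub] .
  have marginal: "map_pmf (\<lambda>S'. S' k) (sample_S' V E (E \<union> \<beta>) r) = pi_G V (E \<union> \<beta>)"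
    if "k \<in> {1..r}" for k
    unfolding sample_S'_def sample_S_def
    using map_pmf_component_bind_Pi_pmf[of "{1..r}" k "[]" "\<lambda>_. pi_G V E" "[]"
        "update_path V E (E \<union> \<beta>)"] that pi_G_bind_update_path[OF finV sub assms(2,5)]
    by simp
  show ?thesis
  proof (intro conjI ballI allI impI)
    fix p q
    assume "p \<in> set_pmf (pi_G V E)" "q \<in> set_pmf (update_path V E (E \<union> \<beta>) p)"
    then show "q \<in> shortest_paths V (E \<union> \<beta>) (hd p) (last p)"
      using set_pmf_update_path[OF finV sub set_pmf_pi_G[OF finV assms(2,5)]] by blast
  next
    fix k x y q
    assume "k \<in> {1..r}" "x \<in> V" "y \<in> V" "x \<noteq> y" "q \<in> shortest_paths V (E \<union> \<beta>) x y"
    then show "pmf (map_pmf (\<lambda>S'. S' k) (sample_S' V E (E \<union> \<beta>) r)) q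
        = 1 / (real (card V) * (real (card V) - 1)) * (1 / real (num_sp V (E \<union> \<beta>) x y))"
      using marginal pmf_pi_G[OF finV conn' assms(5)] by simp
  qed
qed

end
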